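(* Let $G$ be a finite supersolvable group and let $A$, $B$ be conjugacy classes of $G$ such that $AB\cap \mathbf{Z}(G)\neq\emptyset$. Then $$\operatorname{dl}(G/\mathbf{C}_G(A))\le 2\,\eta(AB)-1.$$
   Context: For a nonempty subset $X\subseteq G$ that is $G$-invariant (i.e. $g^{-1}Xg=X$ for all $g\in G$), $\eta(X)$ denotes the number of distinct conjugacy classes of $G$ whose union is $X$. For conjugacy classes $A,B$, $AB=\{ab\mid a\in A,b\in B\}$ (a $G$-invariant set). $\mathbf{C}_G(A)=\{g\in G\mid g^{-1}ag=a\text{ for all }a\in A\}$, $\mathbf{Z}(G)$ is the center, and $\operatorname{dl}$ denotes derived length. *)

theory Defs
  imports "HOL-Algebra.Algebra"
begin

definition conj_class :: "('a, 'b) monoid_scheme \<Rightarrow> 'a \<Rightarrow> 'a set" where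
  "conj_class G a = {inv\<^bsub>G\<^esub> g \<otimes>\<^bsub>G\<^esub> a \<otimes>\<^bsub>G\<^esub> g | g. g \<in> carrier G}"

definition is_conj_class :: "('a, 'b) monoid_scheme \<Rightarrow> 'a set \<Rightarrow> bool" where
  "is_conj_class G A \<longleftrightarrow> (\<exists>a \<in> carrier G. A = conj_class G a)"

text \<open>eta(X): number of conjugacy classes of G contained in X
  (for a G-invariant X, these are exactly the classes whose union is X).\<close>
definition eta :: "('a, 'b) monoid_scheme \<Rightarrow> 'a set \<Rightarrow> nat" where
  "eta G S = card {K. is_conj_class G K \<and> K \<subseteq> S}"

definition centralizer :: "('a, 'b) monoid_scheme \<Rightarrow> 'a set \<Rightarrow> 'a set" where
  "centralizer G A = {g \<in> carrier G. \<forall>a \<in> A. inv\<^bsub>G\<^esub> g \<otimes>\<^bsub>G\<^esub> a \<otimes>\<^bsub>G\<^esub> g = a}"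

definition center :: "('a, 'b) monoid_scheme \<Rightarrow> 'a set" where
  "center G = centralizer G (carrier G)"

definition derived_length :: "('a, 'b) monoid_scheme \<Rightarrow> nat" where
  "derived_length G = (LEAST n. (derived G ^^ n) (carrier G) = {\<one>\<^bsub>G\<^esub>})"

definition supersolvable :: "('a, 'b) monoid_scheme \<Rightarrow> bool" where
  "supersolvable G \<longleftrightarrow> group G \<and>
     (\<exists>Ns :: 'a set list. Ns \<noteq> [] \<and> hd Ns = {\<one>\<^bsub>G\<^esub>} \<and> last Ns = carrier G \<and>
        (\<forall>N \<in> set Ns. N \<lhd> G) \<and>
        (\<forall>i. Suc i < length Ns \<longrightarrow> Ns ! i \<subseteq> Ns ! Suc i \<and>
             cyclic_group ((G\<lparr>carrier := Ns ! Suc i\<rparr>) Mod (Ns ! i))))"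

end

theory Submission
  imports Defs
begin

text \<open>Let D = A A\<inverse>; it is a normal subset containing 1 and every commutator x\<inverse> a x a\<inverse>
  with a \<in> A. Take a normal series 1 = N_0 \<le> ... \<le> N_r = G with cyclic factors, and let C_i be the
  normal subgroup of those x whose commutators with A lie in N_i, so C_r = G and C_0 = C_G(A).
  If D \<inter> N_i = D \<inter> N_(i+1) then C_i = C_(i+1). Otherwise D \<inter> N_(i+1) contains a class more than
  D \<inter> N_i, and C_(i+1)'' \<le> C_i: the derived subgroup acts trivially on the cyclic factor
  N_(i+1)/N_i, whose automorphism group is abelian, and the factor itself is abelian. Hence
  dl(G/C_G(A)) \<le> 2 (eta(D) - 1). Finally, if a b is central with a \<in> A and b \<in> B, multiplication by
  a b maps D into A B and conjugacy classes injectively to conjugacy classes, so eta(D) \<le> eta(A B).\<close>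

section \<open>Conjugation and centralizers\<close>

definition conj_invariant :: "('a, 'b) monoid_scheme \<Rightarrow> 'a set \<Rightarrow> bool" where
  "conj_invariant G S \<longleftrightarrow>
     S \<subseteq> carrier G \<and> (\<forall>g \<in> carrier G. \<forall>a \<in> S. inv\<^bsub>G\<^esub> g \<otimes>\<^bsub>G\<^esub> a \<otimes>\<^bsub>G\<^esub> g \<in> S)"

lemma (in group) mult_inv_cancel_left [simp]:
  "x \<in> carrier G \<Longrightarrow> y \<in> carrier G \<Longrightarrow> x \<otimes> (inv x \<otimes> y) = y"
  by (simp add: m_assoc [symmetric])

lemma (in group) inv_mult_cancel_left [simp]:
  "x \<in> carrier G \<Longrightarrow> y \<in> carrier G \<Longrightarrow> inv x \<otimes> (x \<otimes> y) = y"
  by (simp add: m_assoc [symmetric])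

lemma (in normal) conj_invariant: "conj_invariant G H"
  by (auto simp: conj_invariant_def inv_op_closed1)

lemma conj_invariant_Int:
  "conj_invariant G S \<Longrightarrow> conj_invariant G T \<Longrightarrow> conj_invariant G (S \<inter> T)"
  by (auto simp: conj_invariant_def)

lemma (in group) conj_by_commutator_eq:
  assumes x: "x \<in> carrier G" and y: "y \<in> carrier G" and s: "s \<in> carrier G"
    and conj_commute: "inv y \<otimes> (inv x \<otimes> s \<otimes> x) \<otimes> y = inv x \<otimes> (inv y \<otimes> s \<otimes> y) \<otimes> x"
  shows "inv (x \<otimes> y \<otimes> inv x \<otimes> inv y) \<otimes> s \<otimes> (x \<otimes> y \<otimes> inv x \<otimes> inv y) = s"
proof -
  have "inv (x \<otimes> y \<otimes> inv x \<otimes> inv y) \<otimes> s \<otimes> (x \<otimes> y \<otimes> inv x \<otimes> inv y)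
      = y \<otimes> x \<otimes> (inv y \<otimes> (inv x \<otimes> s \<otimes> x) \<otimes> y) \<otimes> inv x \<otimes> inv y"
    using x y s by (simp add: inv_mult_group m_assoc)
  also have "\<dots> = y \<otimes> x \<otimes> (inv x \<otimes> (inv y \<otimes> s \<otimes> y) \<otimes> x) \<otimes> inv x \<otimes> inv y"
    by (simp only: conj_commute)
  also have "\<dots> = s"
    using x y s by (simp add: m_assoc)
  finally show ?thesis .
qed

lemma (in group) conj_int_pow:
  assumes "g \<in> carrier G" "a \<in> carrier G"
  shows "inv g \<otimes> a [^] (n::int) \<otimes> g = (inv g \<otimes> a \<otimes> g) [^] n"
proof -
  have hom: "(\<lambda>a. inv g \<otimes> a \<otimes> g) \<in> hom G G"
    using assms(1) by (auto simp: hom_def m_assoc)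
  show ?thesis
    using hom_int_pow [OF hom assms(2) is_group is_group] by simp
qed

lemma (in group) subgroup_centralizer:
  assumes "T \<subseteq> carrier G"
  shows "subgroup (centralizer G T) G"
proof (rule subgroupI)
  show "centralizer G T \<subseteq> carrier G" "centralizer G T \<noteq> {}"
    using assms by (auto simp: centralizer_def intro!: exI [of _ \<one>])
next
  fix x assume x: "x \<in> centralizer G T"
  have "inv (inv x) \<otimes> a \<otimes> inv x = a" if a: "a \<in> T" for a
  proof -
    have xG: "x \<in> carrier G" and aG: "a \<in> carrier G" and "inv x \<otimes> a \<otimes> x = a"
      using x a assms by (auto simp: centralizer_def)
    then have "x \<otimes> a \<otimes> inv x = x \<otimes> (inv x \<otimes> a \<otimes> x) \<otimes> inv x" by simp
    then show ?thesis using xG aG by (simp add: m_assoc)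
  qed
  then show "inv x \<in> centralizer G T" using x by (simp add: centralizer_def)
next
  fix x y assume x: "x \<in> centralizer G T" and y: "y \<in> centralizer G T"
  have "inv (x \<otimes> y) \<otimes> a \<otimes> (x \<otimes> y) = a" if a: "a \<in> T" for a
  proof -
    have xG: "x \<in> carrier G" and yG: "y \<in> carrier G" and aG: "a \<in> carrier G"
      using x y a assms by (auto simp: centralizer_def)
    then have "inv (x \<otimes> y) \<otimes> a \<otimes> (x \<otimes> y) = inv y \<otimes> (inv x \<otimes> a \<otimes> x) \<otimes> y"
      by (simp add: inv_mult_group m_assoc)
    then show ?thesis using x y a by (simp add: centralizer_def)
  qed
  then show "x \<otimes> y \<in> centralizer G T"
    using x y by (simp add: centralizer_def)
qed

lemma (in group) normal_centralizer:
  assumes A: "conj_invariant G A"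
  shows "centralizer G A \<lhd> G"
proof (rule normal_invI [OF subgroup_centralizer])
  show "A \<subseteq> carrier G" using A by (simp add: conj_invariant_def)
next
  fix g h assume g: "g \<in> carrier G" and h: "h \<in> centralizer G A"
  have hG: "h \<in> carrier G" using h by (simp add: centralizer_def)
  have "inv (g \<otimes> h \<otimes> inv g) \<otimes> a \<otimes> (g \<otimes> h \<otimes> inv g) = a" if a: "a \<in> A" for a
  proof -
    have aG: "a \<in> carrier G" and a': "inv g \<otimes> a \<otimes> g \<in> A"
      using A g a by (auto simp: conj_invariant_def)
    have "inv (g \<otimes> h \<otimes> inv g) \<otimes> a \<otimes> (g \<otimes> h \<otimes> inv g)
        = g \<otimes> (inv h \<otimes> (inv g \<otimes> a \<otimes> g) \<otimes> h) \<otimes> inv g"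
      using g hG aG by (simp add: inv_mult_group m_assoc)
    also have "\<dots> = g \<otimes> (inv g \<otimes> a \<otimes> g) \<otimes> inv g"
      using h a' by (simp add: centralizer_def)
    also have "\<dots> = a" using g aG by (simp add: m_assoc)
    finally show ?thesis .
  qed
  then show "g \<otimes> h \<otimes> inv g \<in> centralizer G A" using g hG by (simp add: centralizer_def)
qed

section \<open>Centralizers modulo a normal subgroup\<close>

definition centralizer_mod :: "('a, 'b) monoid_scheme \<Rightarrow> 'a set \<Rightarrow> 'a set \<Rightarrow> 'a set" where
  "centralizer_mod G S K =
     {x \<in> carrier G. \<forall>a \<in> S. inv\<^bsub>G\<^esub> x \<otimes>\<^bsub>G\<^esub> a \<otimes>\<^bsub>G\<^esub> x \<otimes>\<^bsub>G\<^esub> inv\<^bsub>G\<^esub> a \<in> K}"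

lemma (in group) subgroup_centralizer_mod:
  assumes K: "K \<lhd> G" and S: "conj_invariant G S"
  shows "subgroup (centralizer_mod G S K) G"
proof -
  interpret K: normal K G by (rule K)
  have SG: "S \<subseteq> carrier G" and Sc: "\<And>g a. g \<in> carrier G \<Longrightarrow> a \<in> S \<Longrightarrow> inv g \<otimes> a \<otimes> g \<in> S"
    using S by (auto simp: conj_invariant_def)
  show ?thesis
  proof (rule subgroupI)
    show "centralizer_mod G S K \<subseteq> carrier G" by (auto simp: centralizer_mod_def)
    have "\<one> \<in> centralizer_mod G S K" using SG by (auto simp: centralizer_mod_def subset_iff)
    then show "centralizer_mod G S K \<noteq> {}" by blast
  next
    fix x assume x: "x \<in> centralizer_mod G S K"
    then have xG: "x \<in> carrier G" by (simp add: centralizer_mod_def)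
    have "inv (inv x) \<otimes> a \<otimes> inv x \<otimes> inv a \<in> K" if a: "a \<in> S" for a
    proof -
      have aG: "a \<in> carrier G" using a SG by blast
      define b where "b = x \<otimes> a \<otimes> inv x"
      have b: "b \<in> S" using Sc [of "inv x" a] xG a by (simp add: b_def)
      have bG: "b \<in> carrier G" using b SG by blast
      have "inv x \<otimes> b \<otimes> x \<otimes> inv b \<in> K" using x b by (simp add: centralizer_mod_def)
      moreover have "inv x \<otimes> b \<otimes> x = a" using xG aG by (simp add: b_def m_assoc)
      ultimately have "inv (a \<otimes> inv b) \<in> K" by (simp add: K.m_inv_closed)
      then show ?thesis using xG aG bG by (simp add: inv_mult_group b_def)
    qed
    then show "inv x \<in> centralizer_mod G S K" using xG by (simp add: centralizer_mod_def)
  next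
    fix x y assume x: "x \<in> centralizer_mod G S K" and y: "y \<in> centralizer_mod G S K"
    then have xG: "x \<in> carrier G" and yG: "y \<in> carrier G" by (auto simp: centralizer_mod_def)
    have "inv (x \<otimes> y) \<otimes> a \<otimes> (x \<otimes> y) \<otimes> inv a \<in> K" if a: "a \<in> S" for a
    proof -
      have aG: "a \<in> carrier G" using a SG by blast
      define b where "b = inv x \<otimes> a \<otimes> x"
      have b: "b \<in> S" using Sc [OF xG a] by (simp add: b_def)
      have bG: "b \<in> carrier G" using b SG by blast
      have "inv y \<otimes> b \<otimes> y \<otimes> inv b \<in> K" using y b by (simp add: centralizer_mod_def)
      moreover have "b \<otimes> inv a \<in> K" using x a by (simp add: centralizer_mod_def b_def)
      ultimately have "(inv y \<otimes> b \<otimes> y \<otimes> inv b) \<otimes> (b \<otimes> inv a) \<in> K" by (rule K.m_closed)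
      moreover have "(inv y \<otimes> b \<otimes> y \<otimes> inv b) \<otimes> (b \<otimes> inv a) = inv (x \<otimes> y) \<otimes> a \<otimes> (x \<otimes> y) \<otimes> inv a"
        using xG yG aG bG by (simp add: b_def m_assoc inv_mult_group)
      ultimately show ?thesis by simp
    qed
    then show "x \<otimes> y \<in> centralizer_mod G S K" using xG yG by (simp add: centralizer_mod_def)
  qed
qed

lemma (in group) centralizer_mod_one:
  assumes "S \<subseteq> carrier G"
  shows "centralizer_mod G S {\<one>} = centralizer G S"
proof -
  have "inv x \<otimes> a \<otimes> x \<otimes> inv a = \<one> \<longleftrightarrow> inv x \<otimes> a \<otimes> x = a"
    if "x \<in> carrier G" "a \<in> carrier G" for x a
    using that by (metis inv_closed m_closed r_inv r_one inv_equality l_inv inv_inv)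
  then show ?thesis using assms by (auto simp: centralizer_def centralizer_mod_def subset_iff)
qed

lemma (in group) centralizer_mod_carrier:
  "S \<subseteq> carrier G \<Longrightarrow> centralizer_mod G S (carrier G) = carrier G"
  by (auto simp: centralizer_mod_def subset_iff)

lemma centralizer_mod_cong:
  assumes "\<And>x a. x \<in> carrier G \<Longrightarrow> a \<in> S \<Longrightarrow> inv\<^bsub>G\<^esub> x \<otimes>\<^bsub>G\<^esub> a \<otimes>\<^bsub>G\<^esub> x \<otimes>\<^bsub>G\<^esub> inv\<^bsub>G\<^esub> a \<in> D"
    and "D \<inter> K = D \<inter> K'"
  shows "centralizer_mod G S K = centralizer_mod G S K'"
  using assms by (auto simp: centralizer_mod_def)

lemma (in group_hom) centralizer_mod_eq_preimage:
  assumes K: "subgroup K G" "kernel G H h \<subseteq> K" and T: "T \<subseteq> carrier G"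
  shows "centralizer_mod G T K = {x \<in> carrier G. h x \<in> centralizer_mod H (h ` T) (h ` K)}"
proof -
  have in_K: "u \<in> K \<longleftrightarrow> h u \<in> h ` K" if u: "u \<in> carrier G" for u
  proof
    assume "h u \<in> h ` K"
    then obtain k where k: "k \<in> K" "h u = h k" by blast
    have kG: "k \<in> carrier G" using k(1) subgroup.subset [OF K(1)] by blast
    have "u \<otimes> inv k \<in> kernel G H h"
      using u kG k(2) by (simp add: kernel_def)
    then have "u \<otimes> inv k \<otimes> k \<in> K"
      using K k(1) by (blast intro: subgroup.m_closed)
    then show "u \<in> K" using u kG by (simp add: G.m_assoc)
  qed blast
  show ?thesis
    using T by (auto simp: centralizer_mod_def in_K subset_iff)
qed

lemma (in group_hom) centralizer_mod_kernel:
  assumes T: "T \<subseteq> carrier G"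
  shows "centralizer_mod G T (kernel G H h) = {x \<in> carrier G. h x \<in> centralizer H (h ` T)}"
proof -
  have "h ` kernel G H h = {\<one>\<^bsub>H\<^esub>}"
    by (auto simp: kernel_def intro!: image_eqI [of _ _ \<one>])
  moreover have "h ` T \<subseteq> carrier H" using T by auto
  ultimately show ?thesis
    using centralizer_mod_eq_preimage [OF subgroup_kernel subset_refl T] H.centralizer_mod_one
    by simp
qed

lemma (in group_hom) derived_subset_preimage:
  assumes "K \<subseteq> carrier G"
  shows "derived G K \<subseteq> {x \<in> carrier G. h x \<in> derived H (h ` K)}"
  using derived_img [OF assms] G.derived_in_carrier [OF assms] by blast

section \<open>Cyclic factors\<close>

text \<open>Conjugations act on a cyclic normal subgroup by power maps, and power maps commute.\<close>
lemma (in group) derived_subset_centralizer_cyclic_normal: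
  assumes M: "M \<lhd> G" and cyclic: "cyclic_group (G\<lparr>carrier := M\<rparr>)"
  shows "derived G (carrier G) \<subseteq> centralizer G M"
proof -
  interpret M: normal M G by (rule M)
  interpret Mgrp: group "G\<lparr>carrier := M\<rparr>" by (rule subgroup_imp_group [OF M.subgroup_axioms])
  obtain c where c: "c \<in> M" and "M = range (\<lambda>n::int. c [^]\<^bsub>G\<lparr>carrier := M\<rparr>\<^esub> n)"
    using cyclic unfolding Mgrp.cyclic_group by auto
  then have powers: "M = range (\<lambda>n::int. c [^] n)"
    using int_pow_consistent [OF M.subgroup_axioms c] by simp
  have cG: "c \<in> carrier G" using c M.subset by blast
  have conj_power: "\<exists>k::int. \<forall>m \<in> M. inv g \<otimes> m \<otimes> g = m [^] k" if g: "g \<in> carrier G" for g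
  proof -
    obtain k :: int where k: "inv g \<otimes> c \<otimes> g = c [^] k"
      using M.inv_op_closed1 [OF g c] powers by auto
    have "inv g \<otimes> c [^] j \<otimes> g = (c [^] j) [^] k" for j :: int
      using g cG by (simp add: conj_int_pow k int_pow_pow mult.commute)
    then show ?thesis using powers by auto
  qed
  have "derived_set G (carrier G) \<subseteq> centralizer G M"
  proof
    fix d assume "d \<in> derived_set G (carrier G)"
    then obtain x y where x: "x \<in> carrier G" and y: "y \<in> carrier G"
      and d: "d = x \<otimes> y \<otimes> inv x \<otimes> inv y" by blast
    obtain k :: int where k: "\<forall>m \<in> M. inv x \<otimes> m \<otimes> x = m [^] k" using conj_power [OF x] by blast
    obtain l :: int where l: "\<forall>m \<in> M. inv y \<otimes> m \<otimes> y = m [^] l" using conj_power [OF y] by blast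
    have "inv d \<otimes> m \<otimes> d = m" if m: "m \<in> M" for m
    proof -
      have mG: "m \<in> carrier G" using m M.subset by blast
      have "inv y \<otimes> (inv x \<otimes> m \<otimes> x) \<otimes> y = m [^] (l * k)"
        using k l m mG y by (simp add: conj_int_pow int_pow_pow)
      moreover have "inv x \<otimes> (inv y \<otimes> m \<otimes> y) \<otimes> x = m [^] (k * l)"
        using k l m mG x by (simp add: conj_int_pow int_pow_pow)
      ultimately show ?thesis
        unfolding d using x y mG by (intro conj_by_commutator_eq) (simp_all add: mult.commute)
    qed
    then show "d \<in> centralizer G M" using x y d by (simp add: centralizer_def)
  qed
  then show ?thesis
    unfolding derived_def by (rule generate_subgroup_incl [OF _ subgroup_centralizer [OF M.subset]])
qed

text \<open>For s in T write the conjugates of s by x and y as p s and q s with p, q in M; since x and y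
  fix M pointwise, conjugating by x y and by y x both give p q s = q p s.\<close>
lemma (in group) derived_centralizer_mod_abelian_subset:
  assumes M: "M \<subseteq> carrier G" and comm: "\<And>p q. p \<in> M \<Longrightarrow> q \<in> M \<Longrightarrow> p \<otimes> q = q \<otimes> p"
    and T: "T \<subseteq> carrier G"
  shows "derived G (centralizer G M \<inter> centralizer_mod G T M) \<subseteq> centralizer G T"
  unfolding derived_def
proof (rule generate_subgroup_incl [OF _ subgroup_centralizer [OF T]], rule subsetI)
  fix d assume "d \<in> derived_set G (centralizer G M \<inter> centralizer_mod G T M)"
  then obtain x y where x: "x \<in> centralizer G M \<inter> centralizer_mod G T M"
    and y: "y \<in> centralizer G M \<inter> centralizer_mod G T M"
    and d: "d = x \<otimes> y \<otimes> inv x \<otimes> inv y" by blast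
  have xG: "x \<in> carrier G" and yG: "y \<in> carrier G"
    using x y by (auto simp: centralizer_def)
  have "inv d \<otimes> s \<otimes> d = s" if s: "s \<in> T" for s
  proof -
    have sG: "s \<in> carrier G" using s T by blast
    define p where "p = inv x \<otimes> s \<otimes> x \<otimes> inv s"
    define q where "q = inv y \<otimes> s \<otimes> y \<otimes> inv s"
    have p: "p \<in> M" and q: "q \<in> M"
      using x y s by (auto simp: p_def q_def centralizer_mod_def)
    have pG: "p \<in> carrier G" and qG: "q \<in> carrier G" using p q M by auto
    have px: "inv x \<otimes> s \<otimes> x = p \<otimes> s" and qy: "inv y \<otimes> s \<otimes> y = q \<otimes> s"
      using xG yG sG by (simp_all add: p_def q_def m_assoc)
    have xq: "inv x \<otimes> q \<otimes> x = q" and yp: "inv y \<otimes> p \<otimes> y = p"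
      using x y p q by (auto simp: centralizer_def)
    have "inv y \<otimes> (inv x \<otimes> s \<otimes> x) \<otimes> y = (inv y \<otimes> p \<otimes> y) \<otimes> (inv y \<otimes> s \<otimes> y)"
      using yG sG pG by (simp add: px m_assoc)
    also have "\<dots> = p \<otimes> q \<otimes> s" using pG qG sG by (simp add: yp qy m_assoc)
    also have "\<dots> = q \<otimes> p \<otimes> s" by (simp add: comm [OF p q])
    also have "\<dots> = (inv x \<otimes> q \<otimes> x) \<otimes> (inv x \<otimes> s \<otimes> x)" using pG qG sG by (simp add: xq px m_assoc)
    also have "\<dots> = inv x \<otimes> (inv y \<otimes> s \<otimes> y) \<otimes> x"
      using xG sG qG by (simp add: qy m_assoc)
    finally show ?thesis unfolding d using xG yG sG by (rule conj_by_commutator_eq [rotated 3])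
  qed
  then show "d \<in> centralizer G T" using xG yG d by (simp add: centralizer_def)
qed

lemma (in group) cyclic_subgroup_comm:
  assumes M: "subgroup M G" and cyclic: "cyclic_group (G\<lparr>carrier := M\<rparr>)"
    and p: "p \<in> M" and q: "q \<in> M"
  shows "p \<otimes> q = q \<otimes> p"
proof -
  interpret Mgrp: group "G\<lparr>carrier := M\<rparr>" by (rule subgroup_imp_group [OF M])
  interpret Mcomm: comm_group "G\<lparr>carrier := M\<rparr>"
    by (rule Mgrp.cyclic_imp_abelian_group [OF cyclic])
  show ?thesis using Mcomm.m_comm [of p q] p q by simp
qed

lemma (in group_hom) derived_subset_centralizer_mod_kernel:
  assumes surj: "h ` carrier G = carrier H" and M: "M \<lhd> G"
    and cyclic: "cyclic_group (H\<lparr>carrier := h ` M\<rparr>)"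
  shows "derived G (carrier G) \<subseteq> centralizer_mod G M (kernel G H h)"
proof -
  interpret M: normal M G by (rule M)
  have hM: "h ` M \<lhd> H"
    by (rule M.surj_hom_normal_subgroup [OF _ surj]) unfold_locales
  have "derived G (carrier G) \<subseteq> {x \<in> carrier G. h x \<in> derived H (carrier H)}"
    using derived_subset_preimage [of "carrier G"] surj by simp
  also have "\<dots> \<subseteq> {x \<in> carrier G. h x \<in> centralizer H (h ` M)}"
    using H.derived_subset_centralizer_cyclic_normal [OF hM cyclic] by blast
  also have "\<dots> = centralizer_mod G M (kernel G H h)"
    by (rule centralizer_mod_kernel [OF M.subset, symmetric])
  finally show ?thesis .
qed

lemma (in group_hom) derived_centralizer_mod_kernel_subset:
  assumes M: "subgroup M G" "kernel G H h \<subseteq> M"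
    and cyclic: "cyclic_group (H\<lparr>carrier := h ` M\<rparr>)" and S: "S \<subseteq> carrier G"
  shows "derived G (centralizer_mod G S M \<inter> centralizer_mod G M (kernel G H h))
    \<subseteq> centralizer_mod G S (kernel G H h)"
proof -
  have hM: "subgroup (h ` M) H" by (rule subgroup_img_is_subgroup [OF M(1)])
  have MG: "M \<subseteq> carrier G" by (rule subgroup.subset [OF M(1)])
  let ?Y = "centralizer_mod G S M \<inter> centralizer_mod G M (kernel G H h)"
  have "h ` ?Y \<subseteq> centralizer H (h ` M) \<inter> centralizer_mod H (h ` S) (h ` M)"
    using centralizer_mod_eq_preimage [OF M S] centralizer_mod_kernel [OF MG] by blast
  then have "derived H (h ` ?Y) \<subseteq> derived H (centralizer H (h ` M) \<inter> centralizer_mod H (h ` S) (h ` M))"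
    by (rule H.mono_derived)
  also have "\<dots> \<subseteq> centralizer H (h ` S)"
    using S H.cyclic_subgroup_comm [OF hM cyclic]
    by (intro H.derived_centralizer_mod_abelian_subset [OF subgroup.subset [OF hM]]) auto
  finally have "derived H (h ` ?Y) \<subseteq> centralizer H (h ` S)" .
  moreover have "derived G ?Y \<subseteq> {x \<in> carrier G. h x \<in> derived H (h ` ?Y)}"
    by (rule derived_subset_preimage) (auto simp: centralizer_mod_def)
  ultimately show ?thesis using centralizer_mod_kernel [OF S] by blast
qed

lemma (in group_hom) derived_derived_centralizer_mod_kernel:
  assumes surj: "h ` carrier G = carrier H" and M: "M \<lhd> G" "kernel G H h \<subseteq> M"
    and cyclic: "cyclic_group (H\<lparr>carrier := h ` M\<rparr>)" and S: "conj_invariant G S"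
  shows "derived G (derived G (centralizer_mod G S M)) \<subseteq> centralizer_mod G S (kernel G H h)"
proof -
  interpret M: normal M G by (rule M(1))
  have SG: "S \<subseteq> carrier G" using S by (simp add: conj_invariant_def)
  let ?CS = "centralizer_mod G S M"
  have "derived G ?CS \<subseteq> ?CS"
    by (rule G.derived_incl [OF subset_refl G.subgroup_centralizer_mod [OF M(1) S]])
  moreover have "derived G ?CS \<subseteq> centralizer_mod G M (kernel G H h)"
    using G.mono_derived [of ?CS "carrier G"] derived_subset_centralizer_mod_kernel [OF surj M(1) cyclic]
    by (auto simp: centralizer_mod_def)
  ultimately have "derived G (derived G ?CS) \<subseteq> derived G (?CS \<inter> centralizer_mod G M (kernel G H h))"
    by (intro G.mono_derived) simp
  also have "\<dots> \<subseteq> centralizer_mod G S (kernel G H h)"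
    by (rule derived_centralizer_mod_kernel_subset [OF M.subgroup_axioms M(2) cyclic SG])
  finally show ?thesis .
qed

lemma (in normal) kernel_r_coset_hom_Mod: "kernel G (G Mod H) (\<lambda>a. H #> a) = H"
  using coset_join1 [OF _ _ subgroup_axioms] coset_join2 [OF _ subgroup_axioms]
  by (auto simp: kernel_def)

lemma FactGroup_restrict_carrier:
  "(G\<lparr>carrier := M\<rparr>) Mod N = (G Mod N)\<lparr>carrier := (\<lambda>a. N #>\<^bsub>G\<^esub> a) ` M\<rparr>"
  unfolding FactGroup_def RCOSETS_def r_coset_def set_mult_def by (simp add: UNION_singleton_eq_range)

lemma (in group) derived_derived_centralizer_mod_subset:
  assumes N: "N \<lhd> G" and M: "M \<lhd> G" "N \<subseteq> M"
    and cyclic: "cyclic_group ((G\<lparr>carrier := M\<rparr>) Mod N)" and S: "conj_invariant G S"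
  shows "derived G (derived G (centralizer_mod G S M)) \<subseteq> centralizer_mod G S N"
proof -
  interpret N: normal N G by (rule N)
  interpret quotient: group_hom G "G Mod N" "\<lambda>a. N #> a"
    by (simp add: group_hom_def group_hom_axioms_def is_group N.factorgroup_is_group N.r_coset_hom_Mod)
  show ?thesis
    using quotient.derived_derived_centralizer_mod_kernel [OF _ M(1) _ _ S] cyclic M(2)
    by (simp add: N.kernel_r_coset_hom_Mod carrier_FactGroup FactGroup_restrict_carrier)
qed

section \<open>Conjugacy classes\<close>

lemma (in group) conj_invariant_conj_class:
  assumes a: "a \<in> carrier G"
  shows "conj_invariant G (conj_class G a)"
proof -
  have "inv g \<otimes> (inv h \<otimes> a \<otimes> h) \<otimes> g = inv (h \<otimes> g) \<otimes> a \<otimes> (h \<otimes> g)"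
    if "g \<in> carrier G" "h \<in> carrier G" for g h
    using that a by (simp add: inv_mult_group m_assoc)
  then show ?thesis
    using a unfolding conj_invariant_def conj_class_def by auto
qed

lemma (in group) conj_class_self: "a \<in> carrier G \<Longrightarrow> a \<in> conj_class G a"
  unfolding conj_class_def by (rule CollectI, rule exI [of _ \<one>]) simp

lemma (in group) is_conj_class_conj_invariant:
  "is_conj_class G A \<Longrightarrow> conj_invariant G A"
  by (auto simp: is_conj_class_def conj_invariant_conj_class)

lemma (in group) conj_class_subset:
  "conj_invariant G T \<Longrightarrow> b \<in> T \<Longrightarrow> conj_class G b \<subseteq> T"
  by (auto simp: conj_invariant_def conj_class_def)

lemma (in group) is_conj_class_eq_conj_class:
  assumes A: "is_conj_class G A" and b: "b \<in> A"
  shows "A = conj_class G b"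
proof
  obtain a where a: "a \<in> carrier G" "A = conj_class G a"
    using A by (auto simp: is_conj_class_def)
  then obtain h where h: "h \<in> carrier G" "b = inv h \<otimes> a \<otimes> h"
    using b by (auto simp: conj_class_def)
  then have bG: "b \<in> carrier G" using a by simp
  have "a = inv (inv h) \<otimes> b \<otimes> inv h" using h a by (simp add: m_assoc)
  then have "a \<in> conj_class G b" unfolding conj_class_def using h(1) inv_closed by blast
  then show "A \<subseteq> conj_class G b"
    unfolding a(2) by (rule conj_class_subset [OF conj_invariant_conj_class [OF bG]])
  show "conj_class G b \<subseteq> A"
    using A b by (intro conj_class_subset is_conj_class_conj_invariant)
qed

lemma (in group) center_commute:
  assumes z: "z \<in> center G" and g: "g \<in> carrier G"
  shows "g \<otimes> z = z \<otimes> g"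
proof -
  have zG: "z \<in> carrier G" and "inv z \<otimes> g \<otimes> z = g"
    using z g by (auto simp: center_def centralizer_def)
  then have "z \<otimes> (inv z \<otimes> g \<otimes> z) = z \<otimes> g" by simp
  then show ?thesis using zG g by (simp add: m_assoc)
qed

lemma (in group) conj_class_mult_center:
  assumes z: "z \<in> center G" and d: "d \<in> carrier G"
  shows "(\<lambda>y. y \<otimes> z) ` conj_class G d = conj_class G (d \<otimes> z)"
proof -
  have zG: "z \<in> carrier G" using z by (simp add: center_def centralizer_def)
  have conj: "inv g \<otimes> (d \<otimes> z) \<otimes> g = inv g \<otimes> d \<otimes> g \<otimes> z" if g: "g \<in> carrier G" for g
    using g d zG center_commute [OF z g] by (simp add: m_assoc)
  then show ?thesis unfolding conj_class_def by (auto simp: conj) (metis conj)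
qed

lemma (in group) finite_conj_classes:
  assumes "finite (carrier G)"
  shows "finite {K. is_conj_class G K \<and> K \<subseteq> T}"
proof (rule finite_subset)
  show "{K. is_conj_class G K \<and> K \<subseteq> T} \<subseteq> Pow (carrier G)"
    by (auto simp: is_conj_class_def conj_class_def)
  show "finite (Pow (carrier G))" using assms by simp
qed

lemma (in group) eta_mono:
  "finite (carrier G) \<Longrightarrow> S \<subseteq> T \<Longrightarrow> eta G S \<le> eta G T"
  unfolding eta_def by (rule card_mono [OF finite_conj_classes]) auto

lemma (in group) eta_strict_mono:
  assumes fin: "finite (carrier G)" and ST: "S \<subseteq> T" and T: "conj_invariant G T"
    and t: "t \<in> T" "t \<notin> S"
  shows "eta G S < eta G T"
  unfolding eta_def
proof (rule psubset_card_mono [OF finite_conj_classes [OF fin]])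
  have tG: "t \<in> carrier G" using T t(1) by (auto simp: conj_invariant_def)
  have "is_conj_class G (conj_class G t)" "conj_class G t \<subseteq> T" "\<not> conj_class G t \<subseteq> S"
    using tG conj_class_subset [OF T t(1)] conj_class_self [OF tG] t(2)
    by (auto simp: is_conj_class_def)
  then show "{K. is_conj_class G K \<and> K \<subseteq> S} \<subset> {K. is_conj_class G K \<and> K \<subseteq> T}"
    using ST by blast
qed

lemma (in group) eta_one: "eta G {\<one>} = 1"
proof -
  have "conj_class G \<one> = {\<one>}" by (auto simp: conj_class_def intro!: exI [of _ \<one>])
  then have "{K. is_conj_class G K \<and> K \<subseteq> {\<one>}} = {{\<one>}}"
    using conj_class_self by (auto simp: is_conj_class_def)
  then show ?thesis by (simp add: eta_def)
qed

text \<open>Translation by a central element permutes the conjugacy classes.\<close>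
lemma (in group) eta_le_central_translate:
  assumes fin: "finite (carrier G)" and z: "z \<in> center G" and S: "S \<subseteq> carrier G"
    and ST: "(\<lambda>y. y \<otimes> z) ` S \<subseteq> T"
  shows "eta G S \<le> eta G T"
  unfolding eta_def
proof (rule card_inj_on_le [OF _ _ finite_conj_classes [OF fin]])
  have zG: "z \<in> carrier G" using z by (simp add: center_def centralizer_def)
  show "inj_on (image (\<lambda>y. y \<otimes> z)) {K. is_conj_class G K \<and> K \<subseteq> S}"
  proof (rule inj_on_inverseI)
    fix K assume "K \<in> {K. is_conj_class G K \<and> K \<subseteq> S}"
    then have "K \<subseteq> carrier G" using S by blast
    then show "(\<lambda>y. y \<otimes> inv z) ` (\<lambda>y. y \<otimes> z) ` K = K"
      using zG by (force simp: image_image m_assoc)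
  qed
  show "image (\<lambda>y. y \<otimes> z) ` {K. is_conj_class G K \<and> K \<subseteq> S} \<subseteq> {K. is_conj_class G K \<and> K \<subseteq> T}"
  proof
    fix K' assume "K' \<in> image (\<lambda>y. y \<otimes> z) ` {K. is_conj_class G K \<and> K \<subseteq> S}"
    then obtain d where d: "d \<in> carrier G" "conj_class G d \<subseteq> S"
      and K': "K' = (\<lambda>y. y \<otimes> z) ` conj_class G d"
      by (auto simp: is_conj_class_def)
    have "K' = conj_class G (d \<otimes> z)" using K' conj_class_mult_center [OF z d(1)] by simp
    moreover have "K' \<subseteq> T" using K' d(2) ST by blast
    ultimately show "K' \<in> {K. is_conj_class G K \<and> K \<subseteq> T}"
      using d(1) zG by (auto simp: is_conj_class_def)
  qed
qed

lemma (in group) mem_set_mult_set_inv: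
  "d \<in> A <#> set_inv A \<longleftrightarrow> (\<exists>v \<in> A. \<exists>u \<in> A. d = v \<otimes> inv u)"
  by (auto simp: set_mult_def SET_INV_def)

lemma (in group) conj_invariant_set_mult_set_inv:
  assumes A: "conj_invariant G A"
  shows "conj_invariant G (A <#> set_inv A)"
  unfolding conj_invariant_def
proof (intro conjI ballI)
  show "A <#> set_inv A \<subseteq> carrier G"
    using A by (auto simp: conj_invariant_def mem_set_mult_set_inv subset_iff)
next
  fix g d assume g: "g \<in> carrier G" and "d \<in> A <#> set_inv A"
  then obtain u v where uv: "v \<in> A" "u \<in> A" and d: "d = v \<otimes> inv u"
    by (auto simp: mem_set_mult_set_inv)
  have uG: "u \<in> carrier G" and vG: "v \<in> carrier G"
    and conj: "inv g \<otimes> u \<otimes> g \<in> A" "inv g \<otimes> v \<otimes> g \<in> A"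
    using A g uv by (auto simp: conj_invariant_def)
  have "inv g \<otimes> d \<otimes> g = (inv g \<otimes> v \<otimes> g) \<otimes> inv (inv g \<otimes> u \<otimes> g)"
    using g uG vG by (simp add: d inv_mult_group m_assoc)
  then show "inv g \<otimes> d \<otimes> g \<in> A <#> set_inv A"
    using conj by (auto simp: mem_set_mult_set_inv)
qed

section \<open>Derived series along a supersolvable series\<close>

lemma (in group) derived_power_antimono:
  assumes "m \<le> n"
  shows "(derived G ^^ n) (carrier G) \<subseteq> (derived G ^^ m) (carrier G)"
  using assms
proof (induction n rule: dec_induct)
  case (step n)
  have "derived G ((derived G ^^ n) (carrier G)) \<subseteq> (derived G ^^ n) (carrier G)"
    by (rule derived_incl [OF subset_refl exp_of_derived_is_subgroup [OF subgroup_self]])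
  then show ?case using step.IH by simp
qed simp

lemma (in group) derived_length_FactGroup_le:
  assumes C: "C \<lhd> G" and sub: "(derived G ^^ n) (carrier G) \<subseteq> C"
  shows "derived_length (G Mod C) \<le> n"
proof -
  interpret C: normal C G by (rule C)
  interpret quotient: group_hom G "G Mod C" "\<lambda>a. C #> a"
    by (simp add: group_hom_def group_hom_axioms_def is_group C.factorgroup_is_group C.r_coset_hom_Mod)
  have "(derived (G Mod C) ^^ n) (carrier (G Mod C)) = (\<lambda>a. C #> a) ` (derived G ^^ n) (carrier G)"
    using quotient.exp_of_derived_img [of "carrier G" n] by (simp add: carrier_FactGroup)
  also have "\<dots> = {C}"
  proof -
    have "\<one> \<in> (derived G ^^ n) (carrier G)"
      by (rule subgroup.one_closed [OF exp_of_derived_is_subgroup [OF subgroup_self]])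
    moreover have "C #> a = C" if "a \<in> (derived G ^^ n) (carrier G)" for a
      using that sub by (intro coset_join2 [OF _ C.subgroup_axioms]) auto
    ultimately show ?thesis by force
  qed
  finally have "(derived (G Mod C) ^^ n) (carrier (G Mod C)) = {\<one>\<^bsub>G Mod C\<^esub>}" by simp
  then show ?thesis unfolding derived_length_def by (rule Least_le)
qed

lemma (in group) derived_power_centralizer_mod_descend:
  assumes fin: "finite (carrier G)"
    and N: "N \<lhd> G" and M: "M \<lhd> G" "N \<subseteq> M" and cyclic: "cyclic_group ((G\<lparr>carrier := M\<rparr>) Mod N)"
    and S: "conj_invariant G S" and D: "conj_invariant G D"
    and commutators: "\<And>x a. x \<in> carrier G \<Longrightarrow> a \<in> S \<Longrightarrow> inv x \<otimes> a \<otimes> x \<otimes> inv a \<in> D"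
    and n: "(derived G ^^ n) (carrier G) \<subseteq> centralizer_mod G S M"
  shows "(derived G ^^ (n + 2 * (eta G (D \<inter> M) - eta G (D \<inter> N)))) (carrier G)
    \<subseteq> centralizer_mod G S N"
proof (cases "D \<inter> N = D \<inter> M")
  case True
  then show ?thesis using n centralizer_mod_cong [OF commutators True] by simp
next
  case False
  then obtain t where t: "t \<in> D \<inter> M" "t \<notin> D \<inter> N" using M(2) by blast
  have "eta G (D \<inter> N) < eta G (D \<inter> M)"
    using M(2) t by (intro eta_strict_mono [OF fin _ conj_invariant_Int [OF D normal.conj_invariant [OF M(1)]]]) auto
  then have "(derived G ^^ (n + 2 * (eta G (D \<inter> M) - eta G (D \<inter> N)))) (carrier G)
      \<subseteq> (derived G ^^ Suc (Suc n)) (carrier G)"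
    by (intro derived_power_antimono) simp
  also have "\<dots> \<subseteq> derived G (derived G (centralizer_mod G S M))"
    using n by (simp add: mono_derived)
  also have "\<dots> \<subseteq> centralizer_mod G S N"
    by (rule derived_derived_centralizer_mod_subset [OF N M cyclic S])
  finally show ?thesis .
qed

lemma (in group) supersolvable_derived_power_subset_centralizer:
  assumes fin: "finite (carrier G)" and ss: "supersolvable G"
    and S: "conj_invariant G S" and D: "conj_invariant G D" and one_D: "\<one> \<in> D"
    and commutators: "\<And>x a. x \<in> carrier G \<Longrightarrow> a \<in> S \<Longrightarrow> inv x \<otimes> a \<otimes> x \<otimes> inv a \<in> D"
  shows "(derived G ^^ (2 * (eta G D - 1))) (carrier G) \<subseteq> centralizer G S"
proof -
  have SG: "S \<subseteq> carrier G" using S by (simp add: conj_invariant_def)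
  obtain Ns where Ns: "Ns \<noteq> []" "hd Ns = {\<one>}" "last Ns = carrier G" "\<forall>N \<in> set Ns. N \<lhd> G"
    and steps: "\<And>i. Suc i < length Ns \<Longrightarrow> Ns ! i \<subseteq> Ns ! Suc i \<and>
      cyclic_group ((G\<lparr>carrier := Ns ! Suc i\<rparr>) Mod (Ns ! i))"
    using ss unfolding supersolvable_def by blast
  define r where "r = length Ns - 1"
  have normal_Ns: "Ns ! i \<lhd> G" if "i \<le> r" for i
  proof -
    have "i < length Ns" using that Ns(1) by (simp add: r_def less_Suc_eq_le [symmetric])
    then show ?thesis using Ns(4) nth_mem by blast
  qed
  define e where "e i = 2 * (eta G D - eta G (D \<inter> Ns ! i))" for i
  have "(derived G ^^ e i) (carrier G) \<subseteq> centralizer_mod G S (Ns ! i)" if "i \<le> r" for i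
    using that
  proof (induction i rule: inc_induct)
    case base
    have "Ns ! r = carrier G" using Ns(1,3) by (simp add: last_conv_nth r_def)
    then show ?case using exp_of_derived_in_carrier centralizer_mod_carrier [OF SG] by simp
  next
    case (step i)
    have "Suc i < length Ns" using step.hyps(2) by (simp add: r_def)
    then have sub: "Ns ! i \<subseteq> Ns ! Suc i"
      and cyclic: "cyclic_group ((G\<lparr>carrier := Ns ! Suc i\<rparr>) Mod (Ns ! i))"
      using steps by blast+
    have "eta G (D \<inter> Ns ! i) \<le> eta G (D \<inter> Ns ! Suc i)" "eta G (D \<inter> Ns ! Suc i) \<le> eta G D"
      using sub by (auto intro!: eta_mono [OF fin])
    then have "e i = e (Suc i) + 2 * (eta G (D \<inter> Ns ! Suc i) - eta G (D \<inter> Ns ! i))"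
      by (simp add: e_def)
    moreover have "Ns ! i \<lhd> G" "Ns ! Suc i \<lhd> G" using step.hyps normal_Ns by simp_all
    ultimately show ?case
      using derived_power_centralizer_mod_descend [OF fin _ _ sub cyclic S D commutators step.IH]
      by simp
  qed
  moreover have "Ns ! 0 = {\<one>}" using Ns(1,2) by (simp add: hd_conv_nth)
  moreover have "e 0 = 2 * (eta G D - 1)"
    using \<open>Ns ! 0 = {\<one>}\<close> one_D by (simp add: e_def Int_absorb1 eta_one)
  ultimately show ?thesis using centralizer_mod_one [OF SG] by (metis zero_le)
qed

lemma (in group) derived_length_FactGroup_centralizer_le:
  assumes fin: "finite (carrier G)" and ss: "supersolvable G"
    and A: "conj_invariant G A" "A \<noteq> {}"
  shows "derived_length (G Mod centralizer G A) + 2 \<le> 2 * eta G (A <#> set_inv A)"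
proof -
  define D where "D = A <#> set_inv A"
  have AG: "A \<subseteq> carrier G" using A(1) by (simp add: conj_invariant_def)
  have one_D: "\<one> \<in> D"
    using A AG by (force simp: D_def mem_set_mult_set_inv)
  have "(derived G ^^ (2 * (eta G D - 1))) (carrier G) \<subseteq> centralizer G A"
  proof (rule supersolvable_derived_power_subset_centralizer [OF fin ss A(1) _ one_D])
    show "conj_invariant G D"
      unfolding D_def by (rule conj_invariant_set_mult_set_inv [OF A(1)])
    show "inv x \<otimes> a \<otimes> x \<otimes> inv a \<in> D" if "x \<in> carrier G" "a \<in> A" for x a
      using that A(1) by (auto simp: D_def mem_set_mult_set_inv conj_invariant_def)
  qed
  then have "derived_length (G Mod centralizer G A) \<le> 2 * (eta G D - 1)"
    by (rule derived_length_FactGroup_le [OF normal_centralizer [OF A(1)]])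
  moreover have "1 \<le> eta G D" using eta_mono [OF fin, of "{\<one>}" D] one_D eta_one by simp
  ultimately show ?thesis by (simp add: D_def)
qed

text \<open>With u = t\<inverse> a t, central a b gives u\<inverse> a b = t\<inverse> a\<inverse> (a b) t = t\<inverse> b t.\<close>
lemma (in group) central_translate_set_mult_set_inv_subset:
  assumes A: "is_conj_class G A" and B: "is_conj_class G B"
    and a: "a \<in> A" and b: "b \<in> B" and z: "a \<otimes> b \<in> center G"
  shows "(\<lambda>y. y \<otimes> (a \<otimes> b)) ` (A <#> set_inv A) \<subseteq> A <#> B"
proof
  have aG: "a \<in> carrier G" and bG: "b \<in> carrier G"
    using a b A B is_conj_class_conj_invariant by (auto simp: conj_invariant_def)
  fix w assume "w \<in> (\<lambda>y. y \<otimes> (a \<otimes> b)) ` (A <#> set_inv A)"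
  then obtain u v where uv: "v \<in> A" "u \<in> A" and w: "w = v \<otimes> inv u \<otimes> (a \<otimes> b)"
    by (auto simp: mem_set_mult_set_inv)
  obtain t where t: "t \<in> carrier G" "u = inv t \<otimes> a \<otimes> t"
    using uv(2) is_conj_class_eq_conj_class [OF A a] by (auto simp: conj_class_def)
  have "inv u \<otimes> (a \<otimes> b) = inv t \<otimes> inv a \<otimes> (t \<otimes> (a \<otimes> b))"
    using t aG bG by (simp add: inv_mult_group m_assoc)
  also have "\<dots> = inv t \<otimes> b \<otimes> t"
    using t aG bG center_commute [OF z t(1)] by (simp add: m_assoc)
  finally have "inv u \<otimes> (a \<otimes> b) \<in> B"
    using is_conj_class_conj_invariant [OF B] t(1) b by (simp add: conj_invariant_def)
  moreover have "w = v \<otimes> (inv u \<otimes> (a \<otimes> b))"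
    using uv aG bG A is_conj_class_conj_invariant by (simp add: w m_assoc conj_invariant_def subset_iff)
  ultimately show "w \<in> A <#> B" using uv(1) unfolding set_mult_def by blast
qed

theorem corollaryC:
  fixes G :: "('a, 'b) monoid_scheme" and A B :: "'a set"
  assumes "group G" and "finite (carrier G)" and "supersolvable G"
    and "is_conj_class G A" and "is_conj_class G B"
    and "(A <#>\<^bsub>G\<^esub> B) \<inter> center G \<noteq> {}"
  shows "int (derived_length (G Mod (centralizer G A))) \<le> 2 * int (eta G (A <#>\<^bsub>G\<^esub> B)) - 1"
proof -
  interpret group G by (rule assms(1))
  obtain a b where a: "a \<in> A" and b: "b \<in> B" and z: "a \<otimes>\<^bsub>G\<^esub> b \<in> center G"
    using assms(6) unfolding set_mult_def by blast
  have A: "conj_invariant G A" by (rule is_conj_class_conj_invariant [OF assms(4)])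
  have "A <#>\<^bsub>G\<^esub> set_inv\<^bsub>G\<^esub> A \<subseteq> carrier G"
    using conj_invariant_set_mult_set_inv [OF A] by (simp add: conj_invariant_def)
  then have "eta G (A <#>\<^bsub>G\<^esub> set_inv\<^bsub>G\<^esub> A) \<le> eta G (A <#>\<^bsub>G\<^esub> B)"
    by (rule eta_le_central_translate [OF assms(2) z _ central_translate_set_mult_set_inv_subset [OF assms(4,5) a b z]])
  moreover have "derived_length (G Mod centralizer G A) + 2 \<le> 2 * eta G (A <#>\<^bsub>G\<^esub> set_inv\<^bsub>G\<^esub> A)"
    using a by (intro derived_length_FactGroup_centralizer_le [OF assms(2,3) A]) blast
  ultimately show ?thesis by linarith
qed

end
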